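(* Let $n\ge 1$, $m\ge 0$ be integers and let non-negative integers $r_0,r_1,\dots,r_n$ satisfy $$r_n=0,\quad r_{n-1}=m,\quad r_\ell\ge 2r_{\ell+1}\ \text{ for } \ell=n-2,\dots,0.$$ Let $k\ge 2r_0+1$ (so $k\ge 2^n m+1$). Let $T$ be an $n$-simplex and define the subsets of $\mathbb T^n_k$: $$S_0(\texttt v)=D(\texttt v,r_0)\quad(\texttt v\in\Delta_0(T)),$$ $$S_\ell(f)=D(f,r_\ell)\setminus\Big[\bigcup_{i=0}^{\ell-1}\bigcup_{e\in\Delta_i(f)}D(e,r_i)\Big]\quad (f\in\Delta_\ell(T),\ \ell=1,\dots,n-1),$$ $$S_n(T)=\mathbb T^n_k\setminus\Big[\bigcup_{i=0}^{n-1}\bigcup_{f\in\Delta_i(T)}D(f,r_i)\Big].$$ Then the sets $S_\ell(f)$, $f\in\Delta_\ell(T)$, $\ell=0,\dots,n$, are pairwise disjoint and their union is $\mathbb T^n_k$. Consequently $$\mathbb P_k(T)=\bigoplus_{\ell=0}^n\bigoplus_{f\in\Delta_\ell(T)}\mathbb P_k(S_\ell(f))\quad\text{(direct sum)}.$$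
   Context: $T\subset\mathbb R^n$ is an $n$-simplex with vertices $\texttt v_0,\dots,\texttt v_n$ and barycentric coordinates $\lambda_0,\dots,\lambda_n$. $\mathbb N$ includes $0$. The simplicial lattice is $\mathbb T^n_k=\{\alpha=(\alpha_0,\dots,\alpha_n)\in\mathbb N^{n+1}:\sum_i\alpha_i=k\}$, and $\lambda^\alpha=\prod_i\lambda_i^{\alpha_i}$. For $S\subseteq\mathbb T^n_k$, $\mathbb P_k(S)=\mathrm{span}\{\lambda^\alpha:\alpha\in S\}$; $\mathbb P_k(T)$ is the space of polynomials of degree $\le k$ on $T$. $\Delta_\ell(T)$ is the set of $\ell$-dimensional sub-simplices (faces) of $T$; each $f\in\Delta_\ell(T)$ is identified with the set of indices of its vertices, $f\subseteq\{0,\dots,n\}$, $|f|=\ell+1$, and $f^*=\{0,\dots,n\}\setminus f$; a vertex $\texttt v_i$ is identified with $\{i\}$. For $\alpha\in\mathbb T^n_k$, $|\alpha_{f^*}|=\sum_{i\in f^*}\alpha_i$ (the distance $\mathrm{dist}(\alpha,f)$). The lattice tube of $f$ with radius $r$ is $D(f,r)=\{\alpha\in\mathbb T^n_k:|\alpha_{f^*}|\le r\}$. *)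

theory Defs
  imports "HOL-Analysis.Analysis"
begin

definition lattice :: "nat \<Rightarrow> nat \<Rightarrow> (nat \<Rightarrow> nat) set" where
  "lattice n k = {\<alpha>. (\<forall>i>n. \<alpha> i = 0) \<and> (\<Sum>i\<le>n. \<alpha> i) = k}"

text \<open>l-dimensional faces of T, identified with their vertex index sets.\<close>
definition faces :: "nat \<Rightarrow> nat \<Rightarrow> nat set set" where
  "faces n l = {f. f \<subseteq> {0..n} \<and> card f = l + 1}"

text \<open>|alpha_{f*}| = sum of alpha_i over i in f* = {0..n} - f.\<close>
definition fdist :: "nat \<Rightarrow> (nat \<Rightarrow> nat) \<Rightarrow> nat set \<Rightarrow> nat" where
  "fdist n \<alpha> f = (\<Sum>i\<in>{0..n} - f. \<alpha> i)"

definition tube :: "nat \<Rightarrow> nat \<Rightarrow> nat set \<Rightarrow> nat \<Rightarrow> (nat \<Rightarrow> nat) set" where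
  "tube n k f r = {\<alpha> \<in> lattice n k. fdist n \<alpha> f \<le> r}"

definition Sset :: "nat \<Rightarrow> nat \<Rightarrow> (nat \<Rightarrow> nat) \<Rightarrow> nat \<Rightarrow> nat set \<Rightarrow> (nat \<Rightarrow> nat) set" where
  "Sset n k r l f =
     (if l = 0 then tube n k f (r 0)
      else if l < n then tube n k f (r l) - (\<Union>i<l. \<Union>e\<in>{e. e \<subseteq> f \<and> card e = i + 1}. tube n k e (r i))
      else lattice n k - (\<Union>i<n. \<Union>g\<in>faces n i. tube n k g (r i)))"

definition bary :: "(nat \<Rightarrow> 'a::real_vector) \<Rightarrow> nat \<Rightarrow> nat \<Rightarrow> 'a \<Rightarrow> real" where
  "bary v n i x = (THE c. (\<forall>j>n. c j = 0) \<and> (\<Sum>j\<le>n. c j) = 1 \<and> (\<Sum>j\<le>n. c j *\<^sub>R v j) = x) i"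

definition lampow :: "(nat \<Rightarrow> 'a::real_vector) \<Rightarrow> nat \<Rightarrow> (nat \<Rightarrow> nat) \<Rightarrow> 'a \<Rightarrow> real" where
  "lampow v n \<alpha> x = (\<Prod>i\<le>n. bary v n i x ^ \<alpha> i)"

definition Pspan :: "(nat \<Rightarrow> 'a::real_vector) \<Rightarrow> nat \<Rightarrow> (nat \<Rightarrow> nat) set \<Rightarrow> ('a \<Rightarrow> real) set" where
  "Pspan v n S = {p. \<exists>c. p = (\<lambda>x. \<Sum>\<alpha>\<in>S. c \<alpha> * lampow v n \<alpha> x)}"

definition polys :: "nat \<Rightarrow> (real^'n \<Rightarrow> real) set" where
  "polys k = {p. \<exists>c. p = (\<lambda>x. \<Sum>\<beta>\<in>{\<beta>::'n \<Rightarrow> nat. sum \<beta> UNIV \<le> k}. c \<beta> * (\<Prod>i\<in>UNIV. (x $ i) ^ \<beta> i))}"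

definition is_direct_sum :: "'i set \<Rightarrow> ('i \<Rightarrow> ('a \<Rightarrow> real) set) \<Rightarrow> ('a \<Rightarrow> real) set \<Rightarrow> bool" where
  "is_direct_sum I W V \<longleftrightarrow>
     V = {p. \<exists>u. (\<forall>j\<in>I. u j \<in> W j) \<and> p = (\<lambda>x. \<Sum>j\<in>I. u j x)} \<and>
     (\<forall>u. (\<forall>j\<in>I. u j \<in> W j) \<and> (\<forall>x. (\<Sum>j\<in>I. u j x) = 0) \<longrightarrow> (\<forall>j\<in>I. u j = (\<lambda>x. 0)))"

end

theory Submission
  imports Defs
begin

(* The Bernstein polynomials \<lambda>^\<alpha>, \<alpha> \<in> T^n_k, form a basis of P_k(T): the \<lambda>_i are affine
   and x_j = \<Sum>i v_i_j \<lambda>_i, 1 = \<Sum>i \<lambda>_i, so they span; and if \<Sum> c_\<alpha> \<lambda>^\<alpha> = 0, the homogeneous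
   polynomial \<Sum> c_\<alpha> y^\<alpha> vanishes off the hyperplane \<Sum>y_i = 0, hence everywhere, so all
   c_\<alpha> = 0. A partition of the index set of a basis splits the space into a direct sum, so it
   remains to show that the S_l(f) partition T^n_k.
   Covering: \<alpha> lies in S_l(f) for the least l such that \<alpha> \<in> D(f, r_l) for some l-face f.
   Disjointness: let \<alpha> \<in> S_l(f) \<inter> S_l'(f') with l \<le> l'. If f \<subseteq> f' then f = f' or
   D(f, r_l) was removed from S_l'(f'). Otherwise e = f \<inter> f' is a proper subface of f with
   |\<alpha>_e*| \<le> |\<alpha>_f*| + |\<alpha>_f'*| \<le> 2 r_l \<le> r_(l-1) \<le> r_(dim e), so \<alpha> \<in> D(e, r_(dim e)), which was
   removed from S_l(f); e is nonempty since |\<alpha>_\<emptyset>*| = k > 2 r_0. *)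

definition fam_span :: "'b set \<Rightarrow> ('b \<Rightarrow> 'a \<Rightarrow> real) \<Rightarrow> ('a \<Rightarrow> real) set" where
  "fam_span B g = {p. \<exists>c. p = (\<lambda>x. \<Sum>b\<in>B. c b * g b x)}"

lemma Pspan_eq_fam_span: "Pspan v n S = fam_span S (lampow v n)"
  unfolding Pspan_def fam_span_def ..

lemma fam_span_zero: "(\<lambda>x. 0) \<in> fam_span B g"
  unfolding fam_span_def by (intro CollectI exI[of _ "\<lambda>_. 0"]) simp

lemma fam_span_add:
  assumes "p \<in> fam_span B g" "q \<in> fam_span B g"
  shows "(\<lambda>x. p x + q x) \<in> fam_span B g"
proof -
  obtain c d where "p = (\<lambda>x. \<Sum>b\<in>B. c b * g b x)" "q = (\<lambda>x. \<Sum>b\<in>B. d b * g b x)"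
    using assms unfolding fam_span_def by blast
  then show ?thesis unfolding fam_span_def
    by (intro CollectI exI[of _ "\<lambda>b. c b + d b"]) (simp add: sum.distrib distrib_right)
qed

lemma fam_span_scale:
  assumes "p \<in> fam_span B g"
  shows "(\<lambda>x. a * p x) \<in> fam_span B g"
proof -
  obtain c where "p = (\<lambda>x. \<Sum>b\<in>B. c b * g b x)"
    using assms unfolding fam_span_def by blast
  then show ?thesis unfolding fam_span_def
    by (intro CollectI exI[of _ "\<lambda>b. a * c b"]) (simp add: sum_distrib_left mult.assoc)
qed

lemma fam_span_sum:
  assumes "finite I" "\<And>i. i \<in> I \<Longrightarrow> p i \<in> fam_span B g"
  shows "(\<lambda>x. \<Sum>i\<in>I. p i x) \<in> fam_span B g"
  using assms
proof (induction I rule: finite_induct)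
  case empty
  then show ?case using fam_span_zero by simp
next
  case (insert a F)
  then show ?case using fam_span_add[of "p a" B g "\<lambda>x. \<Sum>i\<in>F. p i x"] by simp
qed

lemma fam_span_generator:
  assumes "finite B" "b \<in> B"
  shows "g b \<in> fam_span B g"
proof -
  define c :: "_ \<Rightarrow> real" where "c b' = (if b' = b then 1 else 0)" for b'
  have "(\<Sum>b'\<in>B. c b' * g b' x) = g b x" for x
    using assms by (simp add: c_def if_distrib[of "\<lambda>c. c * _"] sum.delta' cong: if_cong)
  then have "g b = (\<lambda>x. \<Sum>b'\<in>B. c b' * g b' x)"
    by simp
  then show ?thesis unfolding fam_span_def by blast
qed

lemma fam_span_subset:
  assumes "finite B" "\<And>b. b \<in> B \<Longrightarrow> g b \<in> fam_span B' g'"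
  shows "fam_span B g \<subseteq> fam_span B' g'"
proof
  fix p assume "p \<in> fam_span B g"
  then obtain c where "p = (\<lambda>x. \<Sum>b\<in>B. c b * g b x)" unfolding fam_span_def by blast
  then show "p \<in> fam_span B' g'"
    by (simp add: fam_span_sum[OF assms(1)] fam_span_scale[OF assms(2)])
qed

lemma fam_span_mono:
  assumes "finite B" "B \<subseteq> B'" "finite B'"
  shows "fam_span B g \<subseteq> fam_span B' g"
  using assms by (intro fam_span_subset fam_span_generator) auto

lemma fam_span_mult:
  assumes "finite B1" "finite B2"
    and "\<And>b b'. b \<in> B1 \<Longrightarrow> b' \<in> B2 \<Longrightarrow> (\<lambda>x. g b x * g b' x) \<in> fam_span B3 g"
    and "p \<in> fam_span B1 g" "q \<in> fam_span B2 g"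
  shows "(\<lambda>x. p x * q x) \<in> fam_span B3 g"
proof -
  obtain c d where p: "p = (\<lambda>x. \<Sum>b\<in>B1. c b * g b x)" and q: "q = (\<lambda>x. \<Sum>b\<in>B2. d b * g b x)"
    using assms(4,5) unfolding fam_span_def by blast
  have "(\<lambda>x. p x * q x) = (\<lambda>x. \<Sum>b\<in>B1. \<Sum>b'\<in>B2. (c b * d b') * (g b x * g b' x))"
    unfolding p q by (simp add: sum_product mult_ac)
  also have "\<dots> \<in> fam_span B3 g"
    by (intro fam_span_sum assms fam_span_scale)
  finally show ?thesis .
qed

locale graded_family =
  fixes B :: "nat \<Rightarrow> 'b set" and g :: "'b \<Rightarrow> 'a \<Rightarrow> real"
  assumes finite_grade: "finite (B d)"
    and mult_generators: "b \<in> B d \<Longrightarrow> b' \<in> B d' \<Longrightarrow> (\<lambda>x. g b x * g b' x) \<in> fam_span (B (d + d')) g"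
    and one_grade_0: "(\<lambda>x. 1) \<in> fam_span (B 0) g"
begin

lemma mult_grade:
  "p \<in> fam_span (B d) g \<Longrightarrow> q \<in> fam_span (B d') g \<Longrightarrow> (\<lambda>x. p x * q x) \<in> fam_span (B (d + d')) g"
  by (rule fam_span_mult[OF finite_grade finite_grade mult_generators])

lemma power_grade:
  assumes "f \<in> fam_span (B 1) g"
  shows "(\<lambda>x. f x ^ e) \<in> fam_span (B e) g"
proof (induction e)
  case 0
  then show ?case using one_grade_0 by simp
next
  case (Suc e)
  then show ?case using mult_grade[OF assms Suc] by simp
qed

lemma prod_power_grade:
  assumes "finite J" "\<And>j. j \<in> J \<Longrightarrow> f j \<in> fam_span (B 1) g"
  shows "(\<lambda>x. \<Prod>j\<in>J. f j x ^ a j) \<in> fam_span (B (\<Sum>j\<in>J. a j)) g"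
  using assms
proof (induction J rule: finite_induct)
  case empty
  then show ?case using one_grade_0 by simp
next
  case (insert j J)
  then show ?case using mult_grade[OF power_grade] by simp
qed

end

definition monomial_vec :: "('n \<Rightarrow> nat) \<Rightarrow> real^'n \<Rightarrow> real" where
  "monomial_vec \<beta> x = (\<Prod>i\<in>UNIV. (x $ i) ^ \<beta> i)"

definition exps_of_degree_le :: "nat \<Rightarrow> ('n::finite \<Rightarrow> nat) set" where
  "exps_of_degree_le d = {\<beta>. sum \<beta> UNIV \<le> d}"

lemma polys_eq_fam_span: "polys d = fam_span (exps_of_degree_le d) monomial_vec"
  unfolding polys_def fam_span_def exps_of_degree_le_def monomial_vec_def ..

lemma finite_exps_of_degree_le: "finite (exps_of_degree_le d :: ('n::finite \<Rightarrow> nat) set)"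
proof (rule finite_subset)
  show "exps_of_degree_le d \<subseteq> PiE (UNIV::'n set) (\<lambda>_. {..d})"
  proof
    fix \<beta> assume "\<beta> \<in> exps_of_degree_le d"
    then have "\<beta> i \<le> d" for i
      using member_le_sum[of i UNIV \<beta>] unfolding exps_of_degree_le_def by simp
    then show "\<beta> \<in> PiE UNIV (\<lambda>_. {..d})" unfolding PiE_UNIV_domain by simp
  qed
qed (simp add: finite_PiE)

lemma finite_lattice: "finite (lattice n d)"
proof (rule finite_subset)
  show "lattice n d \<subseteq> (\<lambda>f i. if i \<le> n then f i else 0) ` PiE {..n} (\<lambda>_. {..d})"
  proof
    fix \<alpha> assume \<alpha>: "\<alpha> \<in> lattice n d"
    then have "\<alpha> = (\<lambda>i. if i \<le> n then restrict \<alpha> {..n} i else 0)"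
      unfolding lattice_def by force
    moreover have "restrict \<alpha> {..n} \<in> PiE {..n} (\<lambda>_. {..d})"
      using \<alpha> member_le_sum[of _ "{..n}" \<alpha>] unfolding lattice_def by auto
    ultimately show "\<alpha> \<in> (\<lambda>f i. if i \<le> n then f i else 0) ` PiE {..n} (\<lambda>_. {..d})" by blast
  qed
qed (simp add: finite_PiE)

interpretation monomials: graded_family "exps_of_degree_le :: nat \<Rightarrow> ('n::finite \<Rightarrow> nat) set" monomial_vec
proof
  fix b b' :: "'n \<Rightarrow> nat" and d d' assume "b \<in> exps_of_degree_le d" "b' \<in> exps_of_degree_le d'"
  then have "(\<lambda>i. b i + b' i) \<in> exps_of_degree_le (d + d')"
    unfolding exps_of_degree_le_def by (simp add: sum.distrib)
  moreover have "(\<lambda>x. monomial_vec b x * monomial_vec b' x) = monomial_vec (\<lambda>i. b i + b' i)"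
    unfolding monomial_vec_def by (simp add: power_add prod.distrib)
  ultimately show "(\<lambda>x. monomial_vec b x * monomial_vec b' x) \<in> fam_span (exps_of_degree_le (d + d')) monomial_vec"
    by (simp add: fam_span_generator finite_exps_of_degree_le)
next
  have "(\<lambda>x. 1) = monomial_vec (\<lambda>_::'n. 0)" unfolding monomial_vec_def by simp
  moreover have "(\<lambda>_::'n. 0) \<in> exps_of_degree_le 0" unfolding exps_of_degree_le_def by simp
  ultimately show "(\<lambda>x. 1) \<in> fam_span (exps_of_degree_le 0) (monomial_vec :: _ \<Rightarrow> real^'n \<Rightarrow> real)"
    by (simp add: fam_span_generator finite_exps_of_degree_le)
qed (rule finite_exps_of_degree_le)

interpretation bernstein: graded_family "lattice n" "lampow v n" for n v
proof
  fix b b' d d' assume "b \<in> lattice n d" "b' \<in> lattice n d'"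
  then have "(\<lambda>i. b i + b' i) \<in> lattice n (d + d')"
    unfolding lattice_def by (simp add: sum.distrib)
  moreover have "(\<lambda>x. lampow v n b x * lampow v n b' x) = lampow v n (\<lambda>i. b i + b' i)"
    unfolding lampow_def by (simp add: power_add prod.distrib)
  ultimately show "(\<lambda>x. lampow v n b x * lampow v n b' x) \<in> fam_span (lattice n (d + d')) (lampow v n)"
    by (simp add: fam_span_generator finite_lattice)
next
  have "(\<lambda>x. 1) = lampow v n (\<lambda>_. 0)" unfolding lampow_def by simp
  moreover have "(\<lambda>_. 0) \<in> lattice n 0" unfolding lattice_def by simp
  ultimately show "(\<lambda>x. 1) \<in> fam_span (lattice n 0) (lampow v n)"
    by (simp add: fam_span_generator finite_lattice)
qed (rule finite_lattice)

locale simplex_vertices =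
  fixes v :: "nat \<Rightarrow> real^'n" and n :: nat
  assumes inj: "inj_on v {..n}" and indep: "\<not> affine_dependent (v ` {..n})"
    and card: "CARD('n) = n"
begin

lemma affine_coords_unique:
  assumes "(\<Sum>j\<le>n. a j) = 0" "(\<Sum>j\<le>n. a j *\<^sub>R v j) = 0" "j \<le> n"
  shows "a j = 0"
proof (rule ccontr)
  assume nz: "a j \<noteq> 0"
  let ?U = "\<lambda>w. a (inv_into {..n} v w)"
  have "sum ?U (v ` {..n}) = 0" "(\<Sum>w\<in>v ` {..n}. ?U w *\<^sub>R w) = 0"
    using inj assms(1,2) by (simp_all add: sum.reindex inv_into_f_f)
  moreover have "?U (v j) \<noteq> 0" "v j \<in> v ` {..n}"
    using nz assms(3) inj by (simp_all add: inv_into_f_f)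
  ultimately have "affine_dependent (v ` {..n})"
    unfolding affine_dependent_explicit_finite[OF finite_imageI[OF finite_atMost]] by blast
  then show False using indep by blast
qed

lemma affine_coords_exist: "\<exists>c. (\<Sum>j\<le>n. c j) = 1 \<and> (\<Sum>j\<le>n. c j *\<^sub>R v j) = x"
proof -
  have "aff_dim (v ` {..n}) = int n"
    using aff_dim_affine_independent[OF indep] inj by (simp add: card_image)
  then have "aff_dim (v ` {..n}) = DIM(real^'n)"
    using card by simp
  then have "affine hull (v ` {..n}) = UNIV"
    using aff_dim_eq_full by blast
  then obtain u where "sum u (v ` {..n}) = 1" "(\<Sum>w\<in>v ` {..n}. u w *\<^sub>R w) = x"
    unfolding affine_hull_finite[OF finite_imageI[OF finite_atMost]] by blast
  then show ?thesis
    using inj by (intro exI[of _ "\<lambda>j. u (v j)"]) (simp add: sum.reindex)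
qed

lemma bary_eqI:
  assumes "\<forall>j>n. c j = 0" "(\<Sum>j\<le>n. c j) = 1" "(\<Sum>j\<le>n. c j *\<^sub>R v j) = x"
  shows "bary v n i x = c i"
proof -
  have "d = c" if d: "(\<forall>j>n. d j = 0) \<and> (\<Sum>j\<le>n. d j) = 1 \<and> (\<Sum>j\<le>n. d j *\<^sub>R v j) = x" for d
  proof
    fix j
    have "d j - c j = 0" if "j \<le> n"
      using affine_coords_unique[of "\<lambda>j. d j - c j" j] d assms that
      by (simp add: sum_subtractf scaleR_left_diff_distrib)
    then show "d j = c j" using d assms by (cases "j \<le> n") auto
  qed
  then have "(THE c. (\<forall>j>n. c j = 0) \<and> (\<Sum>j\<le>n. c j) = 1 \<and> (\<Sum>j\<le>n. c j *\<^sub>R v j) = x) = c"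
    using assms by (intro the_equality) blast+
  then show ?thesis unfolding bary_def by simp
qed

lemma
  shows sum_bary: "(\<Sum>j\<le>n. bary v n j x) = 1"
    and sum_bary_scaleR: "(\<Sum>j\<le>n. bary v n j x *\<^sub>R v j) = x"
    and bary_eq_0: "j > n \<Longrightarrow> bary v n j x = 0"
proof -
  obtain c where c: "(\<Sum>j\<le>n. c j) = 1" "(\<Sum>j\<le>n. c j *\<^sub>R v j) = x"
    using affine_coords_exist by blast
  define c' where "c' j = (if j \<le> n then c j else 0)" for j
  have c': "\<forall>j>n. c' j = 0" "(\<Sum>j\<le>n. c' j) = 1" "(\<Sum>j\<le>n. c' j *\<^sub>R v j) = x"
    using c unfolding c'_def by auto
  show "(\<Sum>j\<le>n. bary v n j x) = 1" "(\<Sum>j\<le>n. bary v n j x *\<^sub>R v j) = x"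
    "j > n \<Longrightarrow> bary v n j x = 0"
    using c' by (simp_all add: bary_eqI[OF c'])
qed

lemma bary_affine:
  "bary v n i x = bary v n i 0 + (\<Sum>j\<in>UNIV. x $ j * (bary v n i (axis j 1) - bary v n i 0))"
proof -
  define c where "c l = bary v n l 0 + (\<Sum>j\<in>UNIV. x $ j * (bary v n l (axis j 1) - bary v n l 0))" for l
  have "(\<Sum>l\<le>n. c l) = 1 + (\<Sum>l\<le>n. \<Sum>j\<in>UNIV. x $ j * (bary v n l (axis j 1) - bary v n l 0))"
    unfolding c_def by (simp add: sum.distrib sum_bary)
  also have "\<dots> = 1 + (\<Sum>j\<in>UNIV. x $ j * ((\<Sum>l\<le>n. bary v n l (axis j 1)) - (\<Sum>l\<le>n. bary v n l 0)))"
    by (subst sum.swap) (simp add: sum_distrib_left sum_subtractf right_diff_distrib)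
  finally have sum_c: "(\<Sum>l\<le>n. c l) = 1"
    by (simp add: sum_bary)
  have "(\<Sum>l\<le>n. c l *\<^sub>R v l)
      = 0 + (\<Sum>l\<le>n. \<Sum>j\<in>UNIV. (x $ j * (bary v n l (axis j 1) - bary v n l 0)) *\<^sub>R v l)"
    unfolding c_def by (simp add: sum.distrib scaleR_add_left scaleR_sum_left sum_bary_scaleR)
  also have "\<dots> = (\<Sum>j\<in>UNIV. x $ j *\<^sub>R ((\<Sum>l\<le>n. bary v n l (axis j 1) *\<^sub>R v l) - (\<Sum>l\<le>n. bary v n l 0 *\<^sub>R v l)))"
    by (subst sum.swap)
      (simp add: scaleR_right.sum scaleR_right_diff_distrib right_diff_distrib scaleR_left_diff_distrib sum_subtractf)
  also have "\<dots> = (\<Sum>j\<in>UNIV. x $ j *\<^sub>R axis j 1)"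
    by (simp add: sum_bary_scaleR)
  also have "\<dots> = x"
    using basis_expansion[of x] by (simp add: scalar_mult_eq_scaleR)
  finally have comb_c: "(\<Sum>l\<le>n. c l *\<^sub>R v l) = x" .
  have "\<forall>l>n. c l = 0" unfolding c_def by (simp add: bary_eq_0)
  then have "bary v n i x = c i" by (rule bary_eqI[OF _ sum_c comb_c])
  then show ?thesis unfolding c_def .
qed

lemma bary_in_polys_1: "bary v n i \<in> fam_span (exps_of_degree_le 1) monomial_vec"
proof -
  have const: "(\<lambda>x::real^'n. a) \<in> fam_span (exps_of_degree_le 1) monomial_vec" for a
  proof -
    have "(\<lambda>_. 0) \<in> exps_of_degree_le 1" by (simp add: exps_of_degree_le_def)
    then have "(\<lambda>x. a * monomial_vec (\<lambda>_. 0) x) \<in> fam_span (exps_of_degree_le 1) (monomial_vec :: _ \<Rightarrow> real^'n \<Rightarrow> real)"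
      by (intro fam_span_scale fam_span_generator finite_exps_of_degree_le)
    then show ?thesis by (simp add: monomial_vec_def)
  qed
  have coord: "(\<lambda>x::real^'n. x $ j) \<in> fam_span (exps_of_degree_le 1) monomial_vec" for j
  proof -
    have "(\<lambda>x::real^'n. x $ j) = monomial_vec (\<lambda>i. if i = j then 1 else 0)"
      unfolding monomial_vec_def by (simp add: if_distrib[of "\<lambda>e. _ ^ e"] prod.delta cong: if_cong)
    moreover have "(\<lambda>i. if i = j then 1 else 0) \<in> exps_of_degree_le 1"
      by (simp add: exps_of_degree_le_def)
    ultimately show ?thesis
      by (simp add: fam_span_generator finite_exps_of_degree_le)
  qed
  have "bary v n i x = bary v n i 0 + (\<Sum>j\<in>UNIV. (bary v n i (axis j 1) - bary v n i 0) * x $ j)" for x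
    by (simp add: bary_affine[of i x] mult.commute)
  then have "bary v n i = (\<lambda>x. bary v n i 0 + (\<Sum>j\<in>UNIV. (bary v n i (axis j 1) - bary v n i 0) * x $ j))"
    by blast
  also have "\<dots> \<in> fam_span (exps_of_degree_le 1) monomial_vec"
    by (intro fam_span_add const fam_span_sum fam_span_scale coord) simp
  finally show ?thesis .
qed

lemma bary_in_bernstein_1:
  assumes "i \<le> n"
  shows "bary v n i \<in> fam_span (lattice n 1) (lampow v n)"
proof -
  let ?e = "\<lambda>i'. if i' = i then 1 else 0 :: nat"
  have "bary v n i = lampow v n ?e"
    using assms unfolding lampow_def
    by (simp add: fun_eq_iff if_distrib[of "\<lambda>e. _ ^ e"] prod.delta cong: if_cong)
  moreover have "?e \<in> lattice n 1"
    using assms unfolding lattice_def by (simp add: sum.delta)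
  ultimately show ?thesis by (simp add: fam_span_generator finite_lattice)
qed

lemma monomial_vec_in_bernstein:
  assumes "\<beta> \<in> exps_of_degree_le k"
  shows "monomial_vec \<beta> \<in> fam_span (lattice n k) (lampow v n)"
proof -
  have coord: "(\<lambda>x::real^'n. x $ j) \<in> fam_span (lattice n 1) (lampow v n)" for j
  proof -
    have "(\<lambda>x::real^'n. x $ j) = (\<lambda>x. \<Sum>i\<le>n. v i $ j * bary v n i x)"
    proof
      fix x :: "real^'n"
      show "x $ j = (\<Sum>i\<le>n. v i $ j * bary v n i x)"
        using arg_cong[OF sum_bary_scaleR[of x], of "\<lambda>y. y $ j"] by (simp add: mult.commute)
    qed
    also have "\<dots> \<in> fam_span (lattice n 1) (lampow v n)"
      by (intro fam_span_sum fam_span_scale bary_in_bernstein_1) auto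
    finally show ?thesis .
  qed
  have "(\<lambda>x. \<Sum>i\<le>n. bary v n i x) \<in> fam_span (lattice n 1) (lampow v n)"
    by (intro fam_span_sum bary_in_bernstein_1) auto
  then have one: "(\<lambda>x. 1) \<in> fam_span (lattice n 1) (lampow v n)"
    by (simp add: sum_bary)
  \<comment> \<open>degree elevation: \<open>1 = \<lambda>\<^sub>0 + \<dots> + \<lambda>\<^sub>n\<close> has Bernstein degree 1\<close>
  have "(\<lambda>x. (\<Prod>j\<in>UNIV. x $ j ^ \<beta> j) * 1 ^ (k - sum \<beta> UNIV))
      \<in> fam_span (lattice n (sum \<beta> UNIV + (k - sum \<beta> UNIV))) (lampow v n)"
    by (rule bernstein.mult_grade[OF bernstein.prod_power_grade[OF _ coord] bernstein.power_grade[OF one]])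
      simp
  moreover have "sum \<beta> UNIV + (k - sum \<beta> UNIV) = k"
    using assms unfolding exps_of_degree_le_def by simp
  ultimately show ?thesis unfolding monomial_vec_def by simp
qed

lemma lampow_in_polys:
  assumes "\<alpha> \<in> lattice n k"
  shows "lampow v n \<alpha> \<in> fam_span (exps_of_degree_le k) monomial_vec"
proof -
  have "(\<lambda>x. \<Prod>j\<le>n. bary v n j x ^ \<alpha> j) \<in> fam_span (exps_of_degree_le (\<Sum>j\<le>n. \<alpha> j)) monomial_vec"
    by (intro monomials.prod_power_grade bary_in_polys_1) simp
  then show ?thesis
    using assms unfolding lattice_def lampow_def by (simp add: fun_eq_iff)
qed

lemma polys_eq_bernstein_span: "polys k = fam_span (lattice n k) (lampow v n)"
  unfolding polys_eq_fam_span
  by (intro equalityI fam_span_subset finite_exps_of_degree_le finite_lattice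
      monomial_vec_in_bernstein lampow_in_polys)

end

definition mpoly_fun :: "(nat \<Rightarrow> nat) set \<Rightarrow> ((nat \<Rightarrow> nat) \<Rightarrow> real) \<Rightarrow> nat \<Rightarrow> (nat \<Rightarrow> real) \<Rightarrow> real" where
  "mpoly_fun A c N y = (\<Sum>\<alpha>\<in>A. c \<alpha> * (\<Prod>i<N. y i ^ \<alpha> i))"

lemma polyfun_coeffs_zero_off_point:
  fixes a :: "nat \<Rightarrow> real"
  assumes "\<And>t. t \<noteq> t0 \<Longrightarrow> (\<Sum>d\<le>D. a d * t ^ d) = 0" "d \<le> D"
  shows "a d = 0"
proof (rule ccontr)
  assume "a d \<noteq> 0"
  then have "finite {t. (\<Sum>d\<le>D. a d * t ^ d) = 0}"
    using polyfun_roots_finite[of a d D] assms(2) by blast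
  moreover have "UNIV - {t0} \<subseteq> {t. (\<Sum>d\<le>D. a d * t ^ d) = 0}" using assms(1) by auto
  ultimately have "finite (UNIV - {t0} :: real set)" by (rule finite_subset[rotated])
  then have "finite (UNIV :: real set)" by simp
  then show False using infinite_UNIV_char_0 by blast
qed

lemma mpoly_fun_Suc:
  assumes "finite A" "\<forall>\<alpha>\<in>A. \<alpha> N \<le> D"
  shows "mpoly_fun A c (Suc N) y = (\<Sum>d\<le>D. mpoly_fun {\<alpha>\<in>A. \<alpha> N = d} c N y * y N ^ d)"
proof -
  have "(\<Sum>d\<le>D. mpoly_fun {\<alpha>\<in>A. \<alpha> N = d} c N y * y N ^ d)
      = (\<Sum>d\<le>D. \<Sum>\<alpha>\<in>{\<alpha>\<in>A. \<alpha> N = d}. c \<alpha> * (\<Prod>i<Suc N. y i ^ \<alpha> i))"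
    unfolding mpoly_fun_def
    by (rule sum.cong[OF refl]) (auto simp: sum_distrib_right mult.assoc intro!: sum.cong)
  also have "\<dots> = mpoly_fun A c (Suc N) y"
    unfolding mpoly_fun_def by (rule sum.group) (use assms in auto)
  finally show ?thesis by simp
qed

lemma mpoly_fun_upd_last: "mpoly_fun A c N (y(N := t)) = mpoly_fun A c N y"
  unfolding mpoly_fun_def by (intro sum.cong prod.cong) auto

lemma mpoly_fun_slices_zero:
  assumes "finite A" "\<And>t. t \<noteq> t0 \<Longrightarrow> mpoly_fun A c (Suc N) (y(N := t)) = 0"
  shows "mpoly_fun {\<alpha>\<in>A. \<alpha> N = d} c N y = 0"
proof -
  define D where "D = max d (Max ((\<lambda>\<alpha>. \<alpha> N) ` A))"
  have D: "\<forall>\<alpha>\<in>A. \<alpha> N \<le> D" unfolding D_def using assms(1) by (auto intro: le_max_iff_disj[THEN iffD2])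
  have "(\<Sum>d\<le>D. mpoly_fun {\<alpha>\<in>A. \<alpha> N = d} c N y * t ^ d) = 0" if "t \<noteq> t0" for t
    using assms(2)[OF that] unfolding mpoly_fun_Suc[OF assms(1) D] mpoly_fun_upd_last by simp
  moreover have "d \<le> D" unfolding D_def by simp
  ultimately show ?thesis
    using polyfun_coeffs_zero_off_point[where a="\<lambda>d. mpoly_fun {\<alpha>\<in>A. \<alpha> N = d} c N y"] by blast
qed

lemma mpoly_fun_coeffs_zero:
  assumes "finite A" "\<forall>\<alpha>\<in>A. \<forall>\<beta>\<in>A. (\<forall>i<N. \<alpha> i = \<beta> i) \<longrightarrow> \<alpha> = \<beta>"
    and "\<And>y. mpoly_fun A c N y = 0" "\<alpha> \<in> A"
  shows "c \<alpha> = 0"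
  using assms
proof (induction N arbitrary: A \<alpha>)
  case 0
  then have "A = {\<alpha>}" by auto
  then show ?case using "0.prems"(3) by (simp add: mpoly_fun_def)
next
  case (Suc N)
  let ?A = "{\<beta>\<in>A. \<beta> N = \<alpha> N}"
  have "finite ?A" using Suc.prems(1) by simp
  moreover have "\<forall>\<beta>\<in>?A. \<forall>\<gamma>\<in>?A. (\<forall>i<N. \<beta> i = \<gamma> i) \<longrightarrow> \<beta> = \<gamma>"
    using Suc.prems(2) by (auto simp: less_Suc_eq)
  moreover have "mpoly_fun ?A c N y = 0" for y
    by (rule mpoly_fun_slices_zero[OF Suc.prems(1)]) (rule Suc.prems(3))
  moreover have "\<alpha> \<in> ?A" using Suc.prems(4) by simp
  ultimately show ?case by (rule Suc.IH)
qed

lemma mpoly_fun_zero_off_hyperplane: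
  assumes "finite A" "\<And>y. (\<Sum>i<Suc N. y i) \<noteq> 0 \<Longrightarrow> mpoly_fun A c (Suc N) y = 0"
  shows "mpoly_fun A c (Suc N) y = 0"
proof -
  have "mpoly_fun {\<alpha>\<in>A. \<alpha> N = d} c N y = 0" for d
  proof (rule mpoly_fun_slices_zero[OF assms(1)])
    fix t :: real assume "t \<noteq> - (\<Sum>i<N. y i)"
    then show "mpoly_fun A c (Suc N) (y(N := t)) = 0" by (intro assms(2)) simp
  qed
  moreover have "\<forall>\<alpha>\<in>A. \<alpha> N \<le> Max ((\<lambda>\<alpha>. \<alpha> N) ` A)" using assms(1) by simp
  ultimately show ?thesis by (simp add: mpoly_fun_Suc[OF assms(1)])
qed

lemma (in simplex_vertices) lampow_linear_independent:
  assumes "\<And>x. (\<Sum>\<alpha>\<in>lattice n k. C \<alpha> * lampow v n \<alpha> x) = 0" "\<alpha> \<in> lattice n k"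
  shows "C \<alpha> = 0"
proof (rule mpoly_fun_coeffs_zero[where A="lattice n k" and c=C and N="Suc n"])
  show "\<forall>\<alpha>\<in>lattice n k. \<forall>\<beta>\<in>lattice n k. (\<forall>i<Suc n. \<alpha> i = \<beta> i) \<longrightarrow> \<alpha> = \<beta>"
  proof (intro ballI impI ext)
    fix \<alpha> \<beta> i assume "\<alpha> \<in> lattice n k" "\<beta> \<in> lattice n k" "\<forall>i<Suc n. \<alpha> i = \<beta> i"
    then show "\<alpha> i = \<beta> i" unfolding lattice_def by (cases "i \<le> n") auto
  qed
  \<comment> \<open>homogeneity: off the hyperplane, rescale \<open>y\<close> to the barycentric coordinates of a point\<close>
  have "mpoly_fun (lattice n k) C (Suc n) y = 0" if s: "(\<Sum>i<Suc n. y i) \<noteq> 0" for y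
  proof -
    define s where "s = (\<Sum>i\<le>n. y i)"
    have "s \<noteq> 0" using that unfolding s_def by (simp add: lessThan_Suc_atMost)
    define \<mu> where "\<mu> i = (if i \<le> n then y i / s else 0)" for i
    have "(\<Sum>j\<le>n. \<mu> j) = 1"
      using \<open>s \<noteq> 0\<close> unfolding \<mu>_def s_def by (simp add: sum_divide_distrib[symmetric])
    then have bary_x: "bary v n i (\<Sum>j\<le>n. \<mu> j *\<^sub>R v j) = \<mu> i" for i
      by (intro bary_eqI) (simp_all add: \<mu>_def)
    have "(\<Prod>i<Suc n. y i ^ \<beta> i) = s ^ k * lampow v n \<beta> (\<Sum>j\<le>n. \<mu> j *\<^sub>R v j)"
      if "\<beta> \<in> lattice n k" for \<beta>
    proof -
      have "(\<Prod>i<Suc n. y i ^ \<beta> i) = (\<Prod>i\<le>n. s ^ \<beta> i * \<mu> i ^ \<beta> i)"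
        unfolding lessThan_Suc_atMost
        by (rule prod.cong) (auto simp: \<mu>_def \<open>s \<noteq> 0\<close> power_divide)
      also have "\<dots> = s ^ (\<Sum>i\<le>n. \<beta> i) * (\<Prod>i\<le>n. \<mu> i ^ \<beta> i)"
        by (simp add: prod.distrib power_sum)
      finally show ?thesis
        using that unfolding lattice_def lampow_def bary_x by simp
    qed
    then have "mpoly_fun (lattice n k) C (Suc n) y
        = s ^ k * (\<Sum>\<alpha>\<in>lattice n k. C \<alpha> * lampow v n \<alpha> (\<Sum>j\<le>n. \<mu> j *\<^sub>R v j))"
      unfolding mpoly_fun_def sum_distrib_left by (intro sum.cong) simp_all
    then show ?thesis using assms(1) by simp
  qed
  then show "mpoly_fun (lattice n k) C (Suc n) y = 0" for y
    by (rule mpoly_fun_zero_off_hyperplane[OF finite_lattice])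
qed (use assms(2) finite_lattice in auto)

lemma fdist_inter_le: "fdist n \<alpha> (f \<inter> g) \<le> fdist n \<alpha> f + fdist n \<alpha> g"
proof -
  have "{0..n} - (f \<inter> g) = ({0..n} - f) \<union> ({0..n} - g)" by auto
  then show ?thesis unfolding fdist_def by (simp add: sum_Un_nat)
qed

lemma fdist_empty: "\<alpha> \<in> lattice n k \<Longrightarrow> fdist n \<alpha> {} = k"
  unfolding fdist_def lattice_def by (simp add: atLeast0AtMost)

lemma lattice_subset_tube_top: "lattice n k \<subseteq> tube n k {0..n} r"
  unfolding tube_def fdist_def by simp

lemma faces_top: "f \<in> faces n n \<longleftrightarrow> f = {0..n}"
  unfolding faces_def using card_subset_eq[of "{0..n}" f] by auto

locale tube_radii =
  fixes n k :: nat and r :: "nat \<Rightarrow> nat"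
  assumes n_ge_1: "n \<ge> 1" and r_top: "r n = 0"
    and r_halving: "\<forall>l. l + 2 \<le> n \<longrightarrow> r l \<ge> 2 * r (l + 1)"
    and k_gt: "k \<ge> 2 * r 0 + 1"
begin

lemma r_antimono: "i \<le> j \<Longrightarrow> j \<le> n \<Longrightarrow> r j \<le> r i"
proof (induction j)
  case (Suc j)
  have "r (Suc j) \<le> r j"
  proof (cases "Suc j = n")
    case False
    then show ?thesis using r_halving[rule_format, of j] Suc.prems(2) by simp
  qed (use r_top in simp)
  then show ?case using Suc by (cases "i = Suc j") auto
qed simp

lemma Sset_iff:
  assumes "l \<le> n" "f \<in> faces n l"
  shows "\<alpha> \<in> Sset n k r l f \<longleftrightarrow>
    \<alpha> \<in> tube n k f (r l) \<and> (\<forall>i<l. \<forall>e. e \<subseteq> f \<and> card e = i + 1 \<longrightarrow> \<alpha> \<notin> tube n k e (r i))"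
proof (cases "l < n")
  case False
  then have "l = n" "f = {0..n}" using assms faces_top by auto
  then show ?thesis
    using n_ge_1 lattice_subset_tube_top unfolding Sset_def faces_def tube_def by auto
qed (auto simp: Sset_def)

lemma Sset_subset_lattice: "Sset n k r l f \<subseteq> lattice n k"
  unfolding Sset_def tube_def by auto

lemma SsetD:
  assumes "l \<le> n" "f \<in> faces n l" "\<alpha> \<in> Sset n k r l f"
  shows "\<alpha> \<in> lattice n k" "fdist n \<alpha> f \<le> r l"
    and "\<And>i e. i < l \<Longrightarrow> e \<subseteq> f \<Longrightarrow> card e = i + 1 \<Longrightarrow> r i < fdist n \<alpha> e"
  using assms Sset_iff[OF assms(1,2)] unfolding tube_def by (auto simp: not_le)

lemma Sset_disjoint_nested:
  assumes "l \<le> l'" "l' \<le> n" "f \<in> faces n l" "f' \<in> faces n l'" "f \<subseteq> f'" "(l, f) \<noteq> (l', f')"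
  shows "Sset n k r l f \<inter> Sset n k r l' f' = {}"
proof -
  have "finite f'" "card f = l + 1" "card f' = l' + 1"
    using assms(3,4) finite_subset unfolding faces_def by auto
  then have "l < l'"
    using assms(1,5,6) card_subset_eq[of f' f] by (cases "l = l'") auto
  then show ?thesis
    using SsetD(2)[OF _ assms(3)] SsetD(3)[OF assms(2,4), of _ l f] assms(1,2,5) \<open>card f = l + 1\<close>
    by (fastforce simp: not_le[symmetric])
qed

lemma Sset_disjoint_crossing:
  assumes "l \<le> l'" "l' \<le> n" "f \<in> faces n l" "f' \<in> faces n l'" "\<not> f \<subseteq> f'"
  shows "Sset n k r l f \<inter> Sset n k r l' f' = {}"
proof (intro equals0I)
  fix \<alpha> assume "\<alpha> \<in> Sset n k r l f \<inter> Sset n k r l' f'"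
  then have \<alpha>: "\<alpha> \<in> Sset n k r l f" "\<alpha> \<in> Sset n k r l' f'" by auto
  have l: "l \<le> n" using assms(1,2) by simp
  have f: "f \<subseteq> {0..n}" "finite f" "card f = l + 1"
    using assms(3) finite_subset unfolding faces_def by auto
  have "l < n"
  proof (rule ccontr)
    assume "\<not> l < n"
    then have "f' = {0..n}" using assms(1,2,4) faces_top by (metis le_antisym order_trans not_le)
    then show False using assms(5) f(1) by simp
  qed
  have close: "fdist n \<alpha> (f \<inter> f') \<le> 2 * r l"
    using fdist_inter_le[of n \<alpha> f f'] SsetD(2)[OF l assms(3) \<alpha>(1)] SsetD(2)[OF assms(2,4) \<alpha>(2)]
      r_antimono[OF assms(1,2)] by simp
  have "card (f \<inter> f') < l + 1"
    using assms(5) f by (metis Int_lower1 inf.absorb_iff1 psubset_card_mono psubsetI)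
  show False
  proof (cases "f \<inter> f' = {}")
    case True
    then show False
      using close fdist_empty[OF SsetD(1)[OF l assms(3) \<alpha>(1)]] k_gt r_antimono[of 0 l] l by simp
  next
    case False
    then obtain i where i: "card (f \<inter> f') = i + 1"
      using f(2) by (metis Suc_eq_plus1 card_0_eq finite_Int not0_implies_Suc)
    then have "i < l" using \<open>card (f \<inter> f') < l + 1\<close> by simp
    then have "2 * r l \<le> r (l - 1)"
      using r_halving[rule_format, of "l - 1"] \<open>l < n\<close> by simp
    also have "\<dots> \<le> r i"
      using r_antimono \<open>i < l\<close> \<open>l < n\<close> by simp
    finally show False
      using SsetD(3)[OF l assms(3) \<alpha>(1) \<open>i < l\<close> _ i] close by simp
  qed
qed

lemma Sset_disjoint:
  assumes "l \<le> n" "l' \<le> n" "f \<in> faces n l" "f' \<in> faces n l'" "(l, f) \<noteq> (l', f')"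
  shows "Sset n k r l f \<inter> Sset n k r l' f' = {}"
proof -
  have ordered: "Sset n k r l f \<inter> Sset n k r l' f' = {}"
    if "l \<le> l'" "l' \<le> n" "f \<in> faces n l" "f' \<in> faces n l'" "(l, f) \<noteq> (l', f')" for l l' f f'
    using Sset_disjoint_nested[OF that(1-4) _ that(5)] Sset_disjoint_crossing[OF that(1-4)] by blast
  show ?thesis
  proof (cases "l \<le> l'")
    case False
    then show ?thesis
      using ordered[of l' l f' f] assms by (simp add: Int_commute)
  qed (use ordered assms in blast)
qed

lemma Union_Sset: "(\<Union>(l, f) \<in> {(l, f). l \<le> n \<and> f \<in> faces n l}. Sset n k r l f) = lattice n k"
proof
  show "lattice n k \<subseteq> (\<Union>(l, f) \<in> {(l, f). l \<le> n \<and> f \<in> faces n l}. Sset n k r l f)"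
  proof
    fix \<alpha> assume \<alpha>: "\<alpha> \<in> lattice n k"
    let ?P = "\<lambda>l. \<exists>f. f \<in> faces n l \<and> \<alpha> \<in> tube n k f (r l)"
    have "?P n" using \<alpha> lattice_subset_tube_top faces_top by blast
    define l where "l = (LEAST l. ?P l)"
    have "?P l" "l \<le> n" unfolding l_def using \<open>?P n\<close> by (auto intro: LeastI Least_le)
    then obtain f where f: "f \<in> faces n l" "\<alpha> \<in> tube n k f (r l)" by blast
    have "\<alpha> \<notin> tube n k e (r i)" if "i < l" "e \<subseteq> f" "card e = i + 1" for i e
      using not_less_Least[of i ?P] that f(1) unfolding l_def faces_def by auto
    then have "\<alpha> \<in> Sset n k r l f" using Sset_iff[OF \<open>l \<le> n\<close> f(1)] f(2) by blast
    then show "\<alpha> \<in> (\<Union>(l, f) \<in> {(l, f). l \<le> n \<and> f \<in> faces n l}. Sset n k r l f)"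
      using \<open>l \<le> n\<close> f(1) by blast
  qed
qed (use Sset_subset_lattice in blast)

end

lemma sums_of_fam_spans_partition:
  assumes "finite I" "\<And>j. j \<in> I \<Longrightarrow> finite (S j)"
    and "\<And>i j. i \<in> I \<Longrightarrow> j \<in> I \<Longrightarrow> i \<noteq> j \<Longrightarrow> S i \<inter> S j = {}"
  shows "fam_span (\<Union>j\<in>I. S j) g = {p. \<exists>u. (\<forall>j\<in>I. u j \<in> fam_span (S j) g) \<and> p = (\<lambda>x. \<Sum>j\<in>I. u j x)}"
proof (intro equalityI subsetI)
  fix p assume "p \<in> fam_span (\<Union>j\<in>I. S j) g"
  then obtain c where p: "p = (\<lambda>x. \<Sum>b\<in>(\<Union>j\<in>I. S j). c b * g b x)"
    unfolding fam_span_def by blast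
  let ?u = "\<lambda>j x. \<Sum>b\<in>S j. c b * g b x"
  have "p = (\<lambda>x. \<Sum>j\<in>I. ?u j x)"
    unfolding p using assms by (simp add: sum.UNION_disjoint)
  moreover have "\<forall>j\<in>I. ?u j \<in> fam_span (S j) g"
    unfolding fam_span_def by blast
  ultimately show "p \<in> {p. \<exists>u. (\<forall>j\<in>I. u j \<in> fam_span (S j) g) \<and> p = (\<lambda>x. \<Sum>j\<in>I. u j x)}"
    by (intro CollectI exI[of _ ?u]) simp
next
  fix p assume "p \<in> {p. \<exists>u. (\<forall>j\<in>I. u j \<in> fam_span (S j) g) \<and> p = (\<lambda>x. \<Sum>j\<in>I. u j x)}"
  then obtain u where u: "\<forall>j\<in>I. u j \<in> fam_span (S j) g" and p: "p = (\<lambda>x. \<Sum>j\<in>I. u j x)"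
    by blast
  have "fam_span (S j) g \<subseteq> fam_span (\<Union>j\<in>I. S j) g" if "j \<in> I" for j
    using assms that by (intro fam_span_mono) auto
  then show "p \<in> fam_span (\<Union>j\<in>I. S j) g"
    unfolding p using u by (intro fam_span_sum[OF assms(1)]) blast
qed

lemma is_direct_sum_partition:
  assumes "finite I" "\<And>j. j \<in> I \<Longrightarrow> finite (S j)"
    and disjoint: "\<And>i j. i \<in> I \<Longrightarrow> j \<in> I \<Longrightarrow> i \<noteq> j \<Longrightarrow> S i \<inter> S j = {}"
    and indep: "\<And>c b. (\<And>x. (\<Sum>a\<in>(\<Union>j\<in>I. S j). c a * g a x) = 0) \<Longrightarrow> b \<in> (\<Union>j\<in>I. S j) \<Longrightarrow> c b = 0"
  shows "is_direct_sum I (\<lambda>j. fam_span (S j) g) (fam_span (\<Union>j\<in>I. S j) g)"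
  unfolding is_direct_sum_def
proof (intro conjI sums_of_fam_spans_partition assms allI impI ballI)
  fix u j
  assume u: "(\<forall>j\<in>I. u j \<in> fam_span (S j) g) \<and> (\<forall>x. (\<Sum>j\<in>I. u j x) = 0)" and "j \<in> I"
  then have "\<forall>j\<in>I. \<exists>c. u j = (\<lambda>x. \<Sum>b\<in>S j. c b * g b x)"
    unfolding fam_span_def by blast
  then obtain cc where cc: "\<forall>j\<in>I. u j = (\<lambda>x. \<Sum>b\<in>S j. cc j b * g b x)"
    by (metis (no_types) bchoice)
  have "\<forall>b\<in>(\<Union>j\<in>I. S j). \<exists>j. j \<in> I \<and> b \<in> S j" by blast
  then obtain idx where idx: "\<forall>b\<in>(\<Union>j\<in>I. S j). idx b \<in> I \<and> b \<in> S (idx b)"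
    by (metis (no_types) bchoice)
  have idx_eq: "idx b = j" if "j \<in> I" "b \<in> S j" for b j
    using idx disjoint that by blast
  define c where "c b = cc (idx b) b" for b
  have "(\<Sum>a\<in>(\<Union>j\<in>I. S j). c a * g a x) = (\<Sum>j\<in>I. u j x)" for x
    using assms(1,2) disjoint cc idx_eq by (simp add: sum.UNION_disjoint c_def)
  then have "(\<Sum>a\<in>(\<Union>j\<in>I. S j). c a * g a x) = 0" for x
    using u by simp
  then have "c b = 0" if "b \<in> S j" for b
    by (rule indep) (use that \<open>j \<in> I\<close> in blast)
  then show "u j = (\<lambda>x. 0)"
    using cc \<open>j \<in> I\<close> idx_eq by (simp add: c_def)
qed

lemma finite_faces_index: "finite {(l, f). l \<le> n \<and> f \<in> faces n l}"
  by (rule finite_subset[of _ "{..n} \<times> Pow {0..n}"]) (auto simp: faces_def)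

locale bernstein_partition = simplex_vertices v n + tube_radii n k r
  for v :: "nat \<Rightarrow> real^'n" and n k :: nat and r :: "nat \<Rightarrow> nat"
begin

lemma is_direct_sum_Pspan_Sset:
  "is_direct_sum {(l, f). l \<le> n \<and> f \<in> faces n l} (\<lambda>(l, f). Pspan v n (Sset n k r l f)) (polys k)"
proof -
  let ?I = "{(l, f). l \<le> n \<and> f \<in> faces n l}"
  let ?S = "\<lambda>(l, f). Sset n k r l f"
  have finite_S: "finite (?S j)" for j
    using finite_subset[OF Sset_subset_lattice finite_lattice] by (simp add: case_prod_beta')
  have disjoint: "?S i \<inter> ?S j = {}" if "i \<in> ?I" "j \<in> ?I" "i \<noteq> j" for i j
    using that by (cases i; cases j) (simp add: Sset_disjoint)
  have union: "(\<Union>j\<in>?I. ?S j) = lattice n k"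
    using Union_Sset by (simp add: case_prod_beta')
  have "is_direct_sum ?I (\<lambda>j. fam_span (?S j) (lampow v n)) (fam_span (\<Union>j\<in>?I. ?S j) (lampow v n))"
  proof (rule is_direct_sum_partition[OF finite_faces_index finite_S disjoint])
    fix c \<alpha>
    assume "\<And>x. (\<Sum>\<beta>\<in>(\<Union>j\<in>?I. ?S j). c \<beta> * lampow v n \<beta> x) = 0" "\<alpha> \<in> (\<Union>j\<in>?I. ?S j)"
    then show "c \<alpha> = 0" unfolding union by (rule lampow_linear_independent)
  qed
  then show ?thesis
    unfolding union polys_eq_bernstein_span Pspan_eq_fam_span by (simp add: case_prod_beta')
qed

end

theorem mainTheorem1:
  fixes n m k :: nat and r :: "nat \<Rightarrow> nat" and v :: "nat \<Rightarrow> real^'n"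
  assumes "n \<ge> 1"
    and "CARD('n) = n"
    and "inj_on v {0..n}" and "\<not> affine_dependent (v ` {0..n})"
    and "r n = 0" and "r (n - 1) = m"
    and "\<forall>l. l + 2 \<le> n \<longrightarrow> r l \<ge> 2 * r (l + 1)"
    and "k \<ge> 2 * r 0 + 1"
  shows "(\<forall>(l, f) \<in> {(l, f). l \<le> n \<and> f \<in> faces n l}. \<forall>(l', f') \<in> {(l, f). l \<le> n \<and> f \<in> faces n l}.
            (l, f) \<noteq> (l', f') \<longrightarrow> Sset n k r l f \<inter> Sset n k r l' f' = {})
       \<and> (\<Union>(l, f) \<in> {(l, f). l \<le> n \<and> f \<in> faces n l}. Sset n k r l f) = lattice n k
       \<and> is_direct_sum {(l, f). l \<le> n \<and> f \<in> faces n l} (\<lambda>(l, f). Pspan v n (Sset n k r l f)) (polys k)"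
proof -
  interpret bernstein_partition v n k r
    using assms(1-5,7,8) by unfold_locales (auto simp: atLeast0AtMost)
  have "\<forall>(l, f) \<in> {(l, f). l \<le> n \<and> f \<in> faces n l}. \<forall>(l', f') \<in> {(l, f). l \<le> n \<and> f \<in> faces n l}.
      (l, f) \<noteq> (l', f') \<longrightarrow> Sset n k r l f \<inter> Sset n k r l' f' = {}"
    by (simp add: Sset_disjoint)
  then show ?thesis
    using Union_Sset is_direct_sum_Pspan_Sset by (intro conjI)
qed

end
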